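(* Assume $\|\Sigma_1\|\le C$ for a universal constant $C$, $\frac1{p^2}\operatorname{var}(\mathbf A_{12}^\top\mathbf A_{13})\to0$, and $p,n\to\infty$ with $p/n\to c\in(0,\infty)$. Then $$\frac1p\,\mathbb E\|\mathbf M_3-\Sigma_3\|_F^2\to0 .$$
   Context: Setting. For each $n$, let $p=p_n$ and $\mathbf x_1,\dots,\mathbf x_n\in\mathbb R^p$ i.i.d. with an absolutely continuous distribution. $\mathbf A_{ij}=\operatorname{sign}(\mathbf x_i-\mathbf x_j)$ (componentwise sign), $\mathbf A_i=\mathbb E\{\operatorname{sign}(\mathbf x_i-\mathbf x)\mid\mathbf x_i\}$ with $\mathbf x$ an independent copy of $\mathbf x_1$, $\Sigma_1=\operatorname{cov}(\mathbf A_{ij})$ ($i\ne j$), $\Sigma_2=\operatorname{cov}(\mathbf A_i)$, $\Sigma_3=\Sigma_1-2\Sigma_2$ (which equals $\operatorname{cov}(\epsilon_{ij})$). Define $\epsilon_{ij}=\mathbf A_{ij}-\mathbf A_i+\mathbf A_j$ and $\mathbf M_3=\frac{2}{n(n-1)}\sum_{1\le i<j\le n}\epsilon_{ij}\epsilon_{ij}^{\top}$. $\|\cdot\|$ is the spectral norm and $\|\cdot\|_F$ the Frobenius norm. *)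

theory Defs
  imports "HOL-Probability.Probability"
begin

text \<open>Vectors of R^p are represented as functions nat => real; only coordinates k < p matter.
  The ambient measurable space / Lebesgue measure on R^p is PiM {..<p} (%_. lborel).\<close>

definition Rp :: "nat \<Rightarrow> (nat \<Rightarrow> real) measure" where
  "Rp p = PiM {..<p} (\<lambda>_. lborel)"

text \<open>Componentwise sign of x - y (the matrix A_ij = sign(x_i - x_j)).\<close>
definition sgnv :: "nat \<Rightarrow> (nat \<Rightarrow> real) \<Rightarrow> (nat \<Rightarrow> real) \<Rightarrow> nat \<Rightarrow> real" where
  "sgnv p x y = (\<lambda>k. if k < p then sgn (x k - y k) else 0)"

text \<open>A_i = E[sign(x_i - x) | x_i], evaluated at x_i = x, with x ~ mu.\<close>
definition Avec :: "nat \<Rightarrow> (nat \<Rightarrow> real) measure \<Rightarrow> (nat \<Rightarrow> real) \<Rightarrow> nat \<Rightarrow> real" where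
  "Avec p \<mu> x = (\<lambda>k. \<integral>y. sgnv p x y k \<partial>\<mu>)"

definition covm :: "'a measure \<Rightarrow> ('a \<Rightarrow> nat \<Rightarrow> real) \<Rightarrow> nat \<Rightarrow> nat \<Rightarrow> real" where
  "covm M V k l = (\<integral>\<omega>. V \<omega> k * V \<omega> l \<partial>M) - (\<integral>\<omega>. V \<omega> k \<partial>M) * (\<integral>\<omega>. V \<omega> l \<partial>M)"

definition Sigma1 :: "nat \<Rightarrow> (nat \<Rightarrow> real) measure \<Rightarrow> nat \<Rightarrow> nat \<Rightarrow> real" where
  "Sigma1 p \<mu> = covm (\<mu> \<Otimes>\<^sub>M \<mu>) (\<lambda>(x, y). sgnv p x y)"

definition Sigma2 :: "nat \<Rightarrow> (nat \<Rightarrow> real) measure \<Rightarrow> nat \<Rightarrow> nat \<Rightarrow> real" where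
  "Sigma2 p \<mu> = covm \<mu> (Avec p \<mu>)"

definition Sigma3 :: "nat \<Rightarrow> (nat \<Rightarrow> real) measure \<Rightarrow> nat \<Rightarrow> nat \<Rightarrow> real" where
  "Sigma3 p \<mu> = (\<lambda>k l. Sigma1 p \<mu> k l - 2 * Sigma2 p \<mu> k l)"

definition epsv :: "nat \<Rightarrow> (nat \<Rightarrow> real) measure \<Rightarrow> (nat \<Rightarrow> nat \<Rightarrow> real) \<Rightarrow> nat \<Rightarrow> nat \<Rightarrow> nat \<Rightarrow> real" where
  "epsv p \<mu> X i j = (\<lambda>k. sgnv p (X i) (X j) k - Avec p \<mu> (X i) k + Avec p \<mu> (X j) k)"

definition M3 :: "nat \<Rightarrow> nat \<Rightarrow> (nat \<Rightarrow> real) measure \<Rightarrow> (nat \<Rightarrow> nat \<Rightarrow> real) \<Rightarrow> nat \<Rightarrow> nat \<Rightarrow> real" where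
  "M3 n p \<mu> X = (\<lambda>k l. 2 / (real n * (real n - 1)) *
      (\<Sum>j<n. \<Sum>i<j. epsv p \<mu> X i j k * epsv p \<mu> X i j l))"

definition frob_sq :: "nat \<Rightarrow> (nat \<Rightarrow> nat \<Rightarrow> real) \<Rightarrow> real" where
  "frob_sq p M = (\<Sum>k<p. \<Sum>l<p. (M k l)\<^sup>2)"

definition spec_norm :: "nat \<Rightarrow> (nat \<Rightarrow> nat \<Rightarrow> real) \<Rightarrow> real" where
  "spec_norm p M = Sup {sqrt (\<Sum>k<p. (\<Sum>l<p. M k l * v l)\<^sup>2) | v. (\<Sum>l<p. (v l)\<^sup>2) = 1}"

definition varA :: "nat \<Rightarrow> (nat \<Rightarrow> real) measure \<Rightarrow> real" where
  "varA p \<mu> = (let T = (\<lambda>(x, y, z). \<Sum>k<p. sgnv p x y k * sgnv p x z k);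
                  M = \<mu> \<Otimes>\<^sub>M (\<mu> \<Otimes>\<^sub>M \<mu>)
              in \<integral>\<omega>. (T \<omega> - (\<integral>\<omega>'. T \<omega>' \<partial>M))\<^sup>2 \<partial>M)"

end

theory Submission
  imports Defs "HOL-Real_Asymp.Real_Asymp"
begin

(*
  M3 - Sigma3 is the average over the pairs i < j of the centred matrices
  D_ij = eps_ij eps_ij^T - Sigma3, so E ||M3 - Sigma3||_F^2 is (2/(n(n-1)))^2 times the sum of
  E <D_ij, D_kl> over all pairs of pairs. Pairs with disjoint indices contribute nothing, the
  n(n-1)/2 diagonal terms are O(p^2) because eps is bounded, and the O(n^3) pairs sharing one
  index contribute E ||K(x) - Sigma3||_F^2 with K(x) = E[eps_12 eps_12^T | x_1 = x].

  Centring the signs given x_1 splits K = B + R + R^T + Sigma2, where B is the conditional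
  covariance of the centred signs. Now ||B||_F^2 is the second moment of the inner product of two
  independent centred sign vectors, which is the double centring of A_12^T A_13 in (x_2, x_3);
  hence E ||B||_F^2 is at most a multiple of var(A_12^T A_13). The terms R and Sigma2 are
  controlled by the quadratic form of A_i, which Jensen's inequality bounds by that of Sigma1.
  Altogether
  (1/p) E ||M3 - Sigma3||_F^2 = O(p/n^2 + var(A_12^T A_13)/(p n) + (1 + ||Sigma1||) / n).
*)

definition bounded_measurable :: "'a measure \<Rightarrow> ('a \<Rightarrow> real) \<Rightarrow> bool" where
  "bounded_measurable N f \<longleftrightarrow> f \<in> borel_measurable N \<and> (\<exists>B. \<forall>x. \<bar>f x\<bar> \<le> B)"

lemma bounded_measurable_const [simp]: "bounded_measurable N (\<lambda>x. c)"
  unfolding bounded_measurable_def by auto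

lemma bounded_measurable_add [simp]:
  assumes "bounded_measurable N f" "bounded_measurable N g"
  shows "bounded_measurable N (\<lambda>x. f x + g x)"
proof -
  obtain B C where "\<And>x. \<bar>f x\<bar> \<le> B" "\<And>x. \<bar>g x\<bar> \<le> C"
    using assms unfolding bounded_measurable_def by auto
  then have "\<bar>f x + g x\<bar> \<le> B + C" for x
    by (rule order_trans[OF abs_triangle_ineq add_mono])
  then show ?thesis using assms unfolding bounded_measurable_def by auto
qed

lemma bounded_measurable_uminus [simp]:
  "bounded_measurable N f \<Longrightarrow> bounded_measurable N (\<lambda>x. - f x)"
  unfolding bounded_measurable_def by auto

lemma bounded_measurable_diff [simp]:
  "bounded_measurable N f \<Longrightarrow> bounded_measurable N g \<Longrightarrow> bounded_measurable N (\<lambda>x. f x - g x)"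
  using bounded_measurable_add[of N f "\<lambda>x. - g x"] by simp

lemma bounded_measurable_mult [simp]:
  assumes "bounded_measurable N f" "bounded_measurable N g"
  shows "bounded_measurable N (\<lambda>x. f x * g x)"
proof -
  obtain B C where B: "\<And>x. \<bar>f x\<bar> \<le> B" and C: "\<And>x. \<bar>g x\<bar> \<le> C"
    using assms unfolding bounded_measurable_def by auto
  have "\<bar>f x * g x\<bar> \<le> B * C" for x
    unfolding abs_mult by (intro mult_mono B C order_trans[OF abs_ge_zero B]) simp
  then show ?thesis using assms unfolding bounded_measurable_def by auto
qed

lemma bounded_measurable_power2 [simp]:
  "bounded_measurable N f \<Longrightarrow> bounded_measurable N (\<lambda>x. (f x)\<^sup>2)"
  unfolding power2_eq_square by simp

lemma bounded_measurable_sum [simp]: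
  "(\<And>i. i \<in> I \<Longrightarrow> bounded_measurable N (f i)) \<Longrightarrow> bounded_measurable N (\<lambda>x. \<Sum>i\<in>I. f i x)"
  by (induction I rule: infinite_finite_induct) auto

lemma bounded_measurable_compose:
  "bounded_measurable N f \<Longrightarrow> g \<in> measurable N' N \<Longrightarrow> bounded_measurable N' (\<lambda>x. f (g x))"
  unfolding bounded_measurable_def by auto

lemma bounded_measurable_integrable [simp]:
  assumes "finite_measure N" "bounded_measurable N f"
  shows "integrable N f"
proof -
  obtain B where "\<And>x. \<bar>f x\<bar> \<le> B" "f \<in> borel_measurable N"
    using assms(2) unfolding bounded_measurable_def by auto
  then show ?thesis by (intro finite_measure.integrable_const_bound[OF assms(1), where B=B]) auto
qed

lemma (in prob_space) abs_integral_le_bound: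
  fixes f :: "'a \<Rightarrow> real"
  assumes "\<And>x. \<bar>f x\<bar> \<le> B"
  shows "\<bar>\<integral>x. f x \<partial>M\<bar> \<le> B"
proof -
  have "\<bar>\<integral>x. f x \<partial>M\<bar> \<le> (\<integral>x. \<bar>f x\<bar> \<partial>M)" by simp
  also have "\<dots> \<le> B"
    using assms order_trans[OF abs_ge_zero assms]
    by (cases "integrable M (\<lambda>x. \<bar>f x\<bar>)") (auto intro!: integral_le_const simp: not_integrable_integral_eq)
  finally show ?thesis .
qed

lemma (in prob_space) bounded_measurable_integral [simp]:
  assumes "bounded_measurable (N \<Otimes>\<^sub>M M) (\<lambda>z. f (fst z) (snd z))"
  shows "bounded_measurable N (\<lambda>x. \<integral>y. f x y \<partial>M)"
proof -
  obtain B where "\<And>x y. \<bar>f x y\<bar> \<le> B"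
    using assms unfolding bounded_measurable_def by auto
  then have "\<bar>\<integral>y. f x y \<partial>M\<bar> \<le> B" for x by (rule abs_integral_le_bound)
  moreover have "case_prod f \<in> borel_measurable (N \<Otimes>\<^sub>M M)"
    using assms unfolding bounded_measurable_def by (simp add: split_beta')
  ultimately show ?thesis unfolding bounded_measurable_def by auto
qed

lemma (in prob_space) square_integral_le_integral_square:
  "bounded_measurable M f \<Longrightarrow> (\<integral>x. f x \<partial>M)\<^sup>2 \<le> (\<integral>x. (f x)\<^sup>2 \<partial>M)"
  using variance_positive[of f] by (subst (asm) variance_eq) auto

lemma (in prob_space) integral_pair_iterated:
  assumes "bounded_measurable (M \<Otimes>\<^sub>M M) f"
  shows "integral\<^sup>L (M \<Otimes>\<^sub>M M) f = (\<integral>x. \<integral>y. f (x, y) \<partial>M \<partial>M)"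
proof -
  interpret pair_prob_space M M by unfold_locales
  show ?thesis using assms by (intro integral_fst'[symmetric]) simp
qed

lemma (in prob_space) integral_triple_iterated:
  assumes "bounded_measurable (M \<Otimes>\<^sub>M (M \<Otimes>\<^sub>M M)) (\<lambda>w. h (fst w) (fst (snd w)) (snd (snd w)))"
  shows "integral\<^sup>L (M \<Otimes>\<^sub>M (M \<Otimes>\<^sub>M M)) (\<lambda>w. h (fst w) (fst (snd w)) (snd (snd w))) =
    (\<integral>x. \<integral>y. \<integral>z. h x y z \<partial>M \<partial>M \<partial>M)"
proof -
  have MM: "prob_space (M \<Otimes>\<^sub>M M)" by (simp add: prob_space_axioms prob_space_pair)
  have "pair_sigma_finite M (M \<Otimes>\<^sub>M M)"
    by (intro pair_sigma_finite.intro sigma_finite_measure_axioms prob_space_imp_sigma_finite MM)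
  moreover have "integrable (M \<Otimes>\<^sub>M (M \<Otimes>\<^sub>M M)) (\<lambda>w. h (fst w) (fst (snd w)) (snd (snd w)))"
    using assms MM by (simp add: prob_space_pair prob_space_axioms prob_space.finite_measure)
  ultimately have "integral\<^sup>L (M \<Otimes>\<^sub>M (M \<Otimes>\<^sub>M M)) (\<lambda>w. h (fst w) (fst (snd w)) (snd (snd w))) =
      (\<integral>x. integral\<^sup>L (M \<Otimes>\<^sub>M M) (\<lambda>w. h x (fst w) (snd w)) \<partial>M)"
    by (subst pair_sigma_finite.integral_fst'[symmetric]) simp_all
  also have "\<dots> = (\<integral>x. \<integral>y. \<integral>z. h x y z \<partial>M \<partial>M \<partial>M)"
  proof (rule Bochner_Integration.integral_cong[OF refl])
    fix x assume "x \<in> space M"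
    then have "bounded_measurable (M \<Otimes>\<^sub>M M) (\<lambda>w. h x (fst w) (snd w))"
      using bounded_measurable_compose[OF assms, of "\<lambda>w. (x, w)"] by simp
    then show "integral\<^sup>L (M \<Otimes>\<^sub>M M) (\<lambda>w. h x (fst w) (snd w)) = (\<integral>y. \<integral>z. h x y z \<partial>M \<partial>M)"
      by (simp add: integral_pair_iterated)
  qed
  finally show ?thesis .
qed

lemma (in prob_space) integral_swap:
  assumes "bounded_measurable (M \<Otimes>\<^sub>M M) (\<lambda>w. f (fst w) (snd w))"
  shows "(\<integral>x. \<integral>y. f x y \<partial>M \<partial>M) = (\<integral>y. \<integral>x. f x y \<partial>M \<partial>M)"
proof -
  interpret pair_prob_space M M by unfold_locales
  show ?thesis using assms by (intro Fubini_integral[symmetric]) (simp add: split_beta')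
qed

lemma integral_PiM_component:
  fixes M :: "'a measure" and f :: "'a \<Rightarrow> real"
  assumes "prob_space M" "i \<in> I" "f \<in> borel_measurable M"
  shows "(\<integral>X. f (X i) \<partial>PiM I (\<lambda>_. M)) = (\<integral>x. f x \<partial>M)"
proof -
  have "(\<integral>X. f (X i) \<partial>PiM I (\<lambda>_. M)) = (\<integral>x. f x \<partial>distr (PiM I (\<lambda>_. M)) M (\<lambda>X. X i))"
    using assms by (intro integral_distr[symmetric]) auto
  also have "distr (PiM I (\<lambda>_. M)) M (\<lambda>X. X i) = M"
    using assms by (intro distr_PiM_component) auto
  finally show ?thesis .
qed

lemma integral_PiM_average_coordinate:
  fixes M :: "'a measure" and F :: "('i \<Rightarrow> 'a) \<Rightarrow> real"
  assumes M: "prob_space M" and I: "finite I" "i \<in> I"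
    and F: "bounded_measurable (PiM I (\<lambda>_. M)) F"
  shows "(\<integral>X. F X \<partial>PiM I (\<lambda>_. M)) = (\<integral>X. (\<integral>z. F (X(i := z)) \<partial>M) \<partial>PiM I (\<lambda>_. M))"
proof -
  interpret product_prob_space "\<lambda>_. M" by (rule product_prob_spaceI) (rule M)
  interpret M: prob_space M by (rule M)
  define I' where "I' = I - {i}"
  have I_eq: "I = insert i I'" and I': "finite I'" "i \<notin> I'"
    using I unfolding I'_def by auto
  have fm: "finite_measure (PiM I (\<lambda>_. M))"
    using prob_space_PiM[of I "\<lambda>_. M"] M by (simp add: prob_space.finite_measure)
  have "(\<lambda>w. (fst w)(i := snd w)) \<in> measurable (PiM I (\<lambda>_. M) \<Otimes>\<^sub>M M) (PiM I (\<lambda>_. M))"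
    by (rule measurable_fun_upd[where J=I]) (use I in auto)
  then have G: "bounded_measurable (PiM I (\<lambda>_. M)) (\<lambda>X. \<integral>z. F (X(i := z)) \<partial>M)"
    by (intro M.bounded_measurable_integral bounded_measurable_compose[OF F])
      simp
  have "(\<integral>X. F X \<partial>PiM I (\<lambda>_. M)) = (\<integral>X. (\<integral>z. F (X(i := z)) \<partial>M) \<partial>PiM I' (\<lambda>_. M))"
    unfolding I_eq using I' F fm I_eq by (intro product_integral_insert) auto
  also have "\<dots> = (\<integral>X. (\<integral>w. \<integral>z. F (X(i := w, i := z)) \<partial>M \<partial>M) \<partial>PiM I' (\<lambda>_. M))"
    by (simp add: M.prob_space)
  also have "\<dots> = (\<integral>X. (\<integral>z. F (X(i := z)) \<partial>M) \<partial>PiM I (\<lambda>_. M))"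
    unfolding I_eq using I' G fm I_eq by (intro product_integral_insert[symmetric]) auto
  finally show ?thesis .
qed

lemma power2_sum4_le: "((a::real) + b + c + d)\<^sup>2 \<le> 4 * (a\<^sup>2 + b\<^sup>2 + c\<^sup>2 + d\<^sup>2)"
proof -
  have "0 \<le> (a - b)\<^sup>2 + (a - c)\<^sup>2 + (a - d)\<^sup>2 + (b - c)\<^sup>2 + (b - d)\<^sup>2 + (c - d)\<^sup>2" by simp
  then show ?thesis by (simp add: power2_eq_square algebra_simps)
qed

lemma (in prob_space) double_centering_square_le:
  assumes h: "bounded_measurable (M \<Otimes>\<^sub>M M) (\<lambda>w. h (fst w) (snd w))"
    and h1: "\<And>y. bounded_measurable M (\<lambda>z. h y z)"
    and h2: "\<And>z. bounded_measurable M (\<lambda>y. h y z)"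
  shows "(\<integral>y. \<integral>z. (h y z - (\<integral>z'. h y z' \<partial>M) - (\<integral>y'. h y' z \<partial>M) + (\<integral>y'. \<integral>z'. h y' z' \<partial>M \<partial>M))\<^sup>2 \<partial>M \<partial>M)
    \<le> 16 * (\<integral>y. \<integral>z. (h y z)\<^sup>2 \<partial>M \<partial>M)"
    (is "?lhs \<le> 16 * ?H")
proof -
  have h_swap: "bounded_measurable (M \<Otimes>\<^sub>M M) (\<lambda>w. h (snd w) (fst w))"
    using bounded_measurable_compose[OF h, of "\<lambda>w. (snd w, fst w)"] by simp
  have [simp]: "bounded_measurable M (\<lambda>y. \<integral>z. h y z \<partial>M)" "bounded_measurable M (\<lambda>z. \<integral>y. h y z \<partial>M)"
    using bounded_measurable_integral[OF h] bounded_measurable_integral[OF h_swap] by simp_all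
  have [simp]: "f \<in> measurable N M \<Longrightarrow> g \<in> measurable N M \<Longrightarrow> bounded_measurable N (\<lambda>w. h (f w) (g w))"
    "f \<in> measurable N M \<Longrightarrow> bounded_measurable N (\<lambda>w. \<integral>z. h (f w) z \<partial>M)"
    "f \<in> measurable N M \<Longrightarrow> bounded_measurable N (\<lambda>w. \<integral>y. h y (f w) \<partial>M)"
    for N :: "'b measure" and f g
    using bounded_measurable_compose[OF h, of "\<lambda>w. (f w, g w)"]
      bounded_measurable_compose[OF \<open>bounded_measurable M (\<lambda>y. \<integral>z. h y z \<partial>M)\<close>, of f]
      bounded_measurable_compose[OF \<open>bounded_measurable M (\<lambda>z. \<integral>y. h y z \<partial>M)\<close>, of f]
    by simp_all
  note [simp] = h1 h2
  have "?lhs \<le> (\<integral>y. \<integral>z. 4 * ((h y z)\<^sup>2 + (\<integral>z'. h y z' \<partial>M)\<^sup>2 + (\<integral>y'. h y' z \<partial>M)\<^sup>2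
      + (\<integral>y'. \<integral>z'. h y' z' \<partial>M \<partial>M)\<^sup>2) \<partial>M \<partial>M)"
    using power2_sum4_le[of "h _ _" "- (\<integral>z'. h _ z' \<partial>M)" "- (\<integral>y'. h y' _ \<partial>M)"]
    by (intro integral_mono) auto
  also have "\<dots> = 4 * (?H + (\<integral>y. (\<integral>z. h y z \<partial>M)\<^sup>2 \<partial>M) + (\<integral>z. (\<integral>y. h y z \<partial>M)\<^sup>2 \<partial>M)
      + (\<integral>y. \<integral>z. h y z \<partial>M \<partial>M)\<^sup>2)"
    by (simp add: integral_swap[of "\<lambda>y z. (\<integral>y'. h y' z \<partial>M)\<^sup>2"] prob_space)
  also have "\<dots> \<le> 4 * (?H + ?H + ?H + ?H)"
  proof -
    have row: "(\<integral>y. (\<integral>z. h y z \<partial>M)\<^sup>2 \<partial>M) \<le> ?H"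
      by (intro integral_mono square_integral_le_integral_square) auto
    have "(\<integral>z. (\<integral>y. h y z \<partial>M)\<^sup>2 \<partial>M) \<le> (\<integral>z. \<integral>y. (h y z)\<^sup>2 \<partial>M \<partial>M)"
      by (intro integral_mono square_integral_le_integral_square) auto
    also have "\<dots> = ?H"
      using h_swap by (intro integral_swap[symmetric]) simp
    finally have col: "(\<integral>z. (\<integral>y. h y z \<partial>M)\<^sup>2 \<partial>M) \<le> ?H" .
    have "(\<integral>y. \<integral>z. h y z \<partial>M \<partial>M)\<^sup>2 \<le> (\<integral>y. (\<integral>z. h y z \<partial>M)\<^sup>2 \<partial>M)"
      by (intro square_integral_le_integral_square) simp
    with row col show ?thesis by (smt (verit))
  qed
  finally show ?thesis by simp
qed

lemma two_mult_le_weighted_squares: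
  assumes "(c::real) > 0"
  shows "2 * u * w \<le> c * u\<^sup>2 + w\<^sup>2 / c"
proof -
  have "0 \<le> (c * u - w)\<^sup>2 / c" using assms by simp
  also have "(c * u - w)\<^sup>2 / c = c * u\<^sup>2 - 2 * u * w + w\<^sup>2 / c"
    using assms by (simp add: power2_eq_square field_simps)
  finally show ?thesis by simp
qed

section \<open>The spectral norm\<close>

lemma spec_norm_bdd_above:
  fixes P :: nat and S :: "nat \<Rightarrow> nat \<Rightarrow> real"
  shows "bdd_above {sqrt (\<Sum>k<P. (\<Sum>l<P. S k l * v l)\<^sup>2) | v. (\<Sum>l<P. (v l)\<^sup>2) = 1}"
proof (rule bdd_aboveI, safe)
  fix v :: "nat \<Rightarrow> real" assume v: "(\<Sum>l<P. (v l)\<^sup>2) = 1"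
  have "\<bar>v l\<bar> \<le> 1" if "l < P" for l
  proof -
    have "(v l)\<^sup>2 \<le> (\<Sum>l<P. (v l)\<^sup>2)" using that by (intro member_le_sum) auto
    then show ?thesis using v by (simp add: abs_square_le_1)
  qed
  then have "\<bar>\<Sum>l<P. S k l * v l\<bar> \<le> (\<Sum>l<P. \<bar>S k l\<bar>)" for k
  proof -
    assume v_le: "\<And>l. l < P \<Longrightarrow> \<bar>v l\<bar> \<le> 1"
    have "\<bar>\<Sum>l<P. S k l * v l\<bar> \<le> (\<Sum>l<P. \<bar>S k l * v l\<bar>)" by (rule sum_abs)
    also have "\<dots> \<le> (\<Sum>l<P. \<bar>S k l\<bar>)"
      using v_le by (intro sum_mono) (simp add: abs_mult mult_left_le)
    finally show ?thesis .
  qed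
  then have "(\<Sum>l<P. S k l * v l)\<^sup>2 \<le> (\<Sum>l<P. \<bar>S k l\<bar>)\<^sup>2" for k
    by (simp add: abs_le_square_iff[symmetric] sum_nonneg)
  then show "sqrt (\<Sum>k<P. (\<Sum>l<P. S k l * v l)\<^sup>2) \<le> sqrt (\<Sum>k<P. (\<Sum>l<P. \<bar>S k l\<bar>)\<^sup>2)"
    by (intro real_sqrt_le_mono sum_mono)
qed

lemma spec_norm_ge:
  fixes P :: nat and S :: "nat \<Rightarrow> nat \<Rightarrow> real"
  assumes "(\<Sum>l<P. (u l)\<^sup>2) = 1"
  shows "sqrt (\<Sum>k<P. (\<Sum>l<P. S k l * u l)\<^sup>2) \<le> spec_norm P S"
  unfolding spec_norm_def using assms by (intro cSup_upper spec_norm_bdd_above) blast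

lemma spec_norm_nonneg:
  fixes P :: nat and S :: "nat \<Rightarrow> nat \<Rightarrow> real"
  assumes "0 < P"
  shows "0 \<le> spec_norm P S"
proof -
  have "(\<Sum>l<P. (if l = 0 then 1 else 0 :: real)\<^sup>2) = (\<Sum>l<P. if l = 0 then 1 else 0)"
    by (intro sum.cong) auto
  also have "\<dots> = 1" using assms by simp
  finally have "sqrt (\<Sum>k<P. (\<Sum>l<P. S k l * (if l = 0 then 1 else 0))\<^sup>2) \<le> spec_norm P S"
    by (rule spec_norm_ge)
  then show ?thesis by (rule order_trans[OF real_sqrt_ge_zero, rotated]) (simp add: sum_nonneg)
qed

lemma norm_matrix_vector_le_spec_norm:
  fixes P :: nat and S :: "nat \<Rightarrow> nat \<Rightarrow> real"
  assumes "0 < P"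
  shows "sqrt (\<Sum>k<P. (\<Sum>l<P. S k l * v l)\<^sup>2) \<le> spec_norm P S * sqrt (\<Sum>l<P. (v l)\<^sup>2)"
proof -
  define t where "t = sqrt (\<Sum>l<P. (v l)\<^sup>2)"
  show ?thesis
  proof (cases "t = 0")
    case True
    then have "v l = 0" if "l < P" for l
      using that by (simp add: t_def sum_nonneg_eq_0_iff)
    then show ?thesis using spec_norm_nonneg[OF assms, of S] by (simp add: t_def[symmetric] True)
  next
    case False
    moreover have "0 \<le> (\<Sum>l<P. (v l)\<^sup>2)" by (simp add: sum_nonneg)
    ultimately have t: "0 < t" unfolding t_def by (simp add: less_le)
    have "(\<Sum>l<P. (v l / t)\<^sup>2) = 1"
      using t unfolding t_def by (simp add: power_divide sum_divide_distrib[symmetric] sum_nonneg)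
    then have "sqrt (\<Sum>k<P. (\<Sum>l<P. S k l * (v l / t))\<^sup>2) \<le> spec_norm P S"
      by (rule spec_norm_ge)
    moreover have "(\<Sum>k<P. (\<Sum>l<P. S k l * (v l / t))\<^sup>2) = (\<Sum>k<P. (\<Sum>l<P. S k l * v l)\<^sup>2) / t\<^sup>2"
      by (simp add: sum_divide_distrib[symmetric] power_divide)
    ultimately show ?thesis using t by (simp add: real_sqrt_divide t_def[symmetric] divide_le_eq)
  qed
qed

lemma quadratic_form_le_spec_norm:
  fixes P :: nat and S :: "nat \<Rightarrow> nat \<Rightarrow> real"
  assumes "0 < P"
  shows "(\<Sum>k<P. \<Sum>l<P. v k * v l * S k l) \<le> spec_norm P S * (\<Sum>l<P. (v l)\<^sup>2)"
proof -
  define u where "u k = (\<Sum>l<P. S k l * v l)" for k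
  have "(\<Sum>k<P. \<Sum>l<P. v k * v l * S k l) = (\<Sum>k<P. v k * u k)"
    unfolding u_def by (simp add: sum_distrib_left algebra_simps)
  also have "\<dots> \<le> sqrt ((\<Sum>k<P. (v k)\<^sup>2) * (\<Sum>k<P. (u k)\<^sup>2))"
    by (rule real_le_rsqrt) (rule Cauchy_Schwarz_ineq_sum)
  also have "\<dots> = sqrt (\<Sum>k<P. (v k)\<^sup>2) * sqrt (\<Sum>k<P. (u k)\<^sup>2)" by (simp add: real_sqrt_mult)
  also have "\<dots> \<le> sqrt (\<Sum>k<P. (v k)\<^sup>2) * (spec_norm P S * sqrt (\<Sum>l<P. (v l)\<^sup>2))"
    unfolding u_def by (intro mult_left_mono norm_matrix_vector_le_spec_norm assms) (simp add: sum_nonneg)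
  also have "\<dots> = spec_norm P S * (\<Sum>l<P. (v l)\<^sup>2)"
    by (simp add: sum_nonneg)
  finally show ?thesis .
qed

definition index_pairs :: "nat \<Rightarrow> (nat \<times> nat) set" where
  "index_pairs n = Sigma {..<n} (\<lambda>j. {..<j})"

lemma finite_index_pairs [simp]: "finite (index_pairs n)"
  unfolding index_pairs_def by auto

lemma index_pairs_subset: "index_pairs n \<subseteq> {..<n} \<times> {..<n}"
  unfolding index_pairs_def by auto

lemma real_card_index_pairs: "real (card (index_pairs n)) = real n * (real n - 1) / 2"
proof -
  have "card (index_pairs n) = (\<Sum>j<n. card {..<j})"
    unfolding index_pairs_def by (rule card_SigmaI) auto
  then have "real (card (index_pairs n)) = (\<Sum>j<n. real j)" by simp
  also have "\<dots> = real n * (real n - 1) / 2" by (induction n) (simp_all add: field_simps)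
  finally show ?thesis .
qed

lemma sum_index_pairs: "(\<Sum>j<n. \<Sum>i<j. f i j) = (\<Sum>p\<in>index_pairs n. f (snd p) (fst p))"
  unfolding index_pairs_def by (subst sum.Sigma) (auto simp: split_beta)

lemma sum_index_pairs_fst_eq_le: "(\<Sum>q\<in>index_pairs n. of_bool (fst q = a)) \<le> real n"
proof -
  have "index_pairs n \<inter> {q. fst q = a} \<subseteq> {a} \<times> {..<n}"
    using index_pairs_subset by auto
  then have "card (index_pairs n \<inter> {q. fst q = a}) \<le> card ({a} \<times> {..<n})"
    by (intro card_mono) auto
  then show ?thesis by (simp add: card_cartesian_product)
qed

lemma sum_index_pairs_snd_eq_le: "(\<Sum>q\<in>index_pairs n. of_bool (snd q = a)) \<le> real n"
proof -
  have "index_pairs n \<inter> {q. snd q = a} \<subseteq> {..<n} \<times> {a}"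
    using index_pairs_subset by auto
  then have "card (index_pairs n \<inter> {q. snd q = a}) \<le> card ({..<n} \<times> {a})"
    by (intro card_mono) auto
  then show ?thesis by (simp add: card_cartesian_product)
qed

lemma doubletons_sharing_one_element:
  assumes "a \<noteq> b" "c \<noteq> d" "{a, b} \<noteq> {c, d}" "{a, b} \<inter> {c, d} \<noteq> {}"
  shows "\<exists>s t u. {a, b} = {s, t} \<and> {c, d} = {s, u} \<and> s \<noteq> t \<and> s \<noteq> u \<and> t \<noteq> u"
proof -
  from assms(4) consider "a = c" | "a = d" | "b = c" | "b = d" by auto
  then show ?thesis
  proof cases
    case 1 with assms show ?thesis by (intro exI[of _ a] exI[of _ b] exI[of _ d]) auto
  next
    case 2 with assms show ?thesis by (intro exI[of _ a] exI[of _ b] exI[of _ c]) auto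
  next
    case 3 with assms show ?thesis by (intro exI[of _ b] exI[of _ a] exI[of _ d]) auto
  next
    case 4 with assms show ?thesis by (intro exI[of _ b] exI[of _ a] exI[of _ c]) auto
  qed
qed

lemma frob_sq_scaled_sum:
  "frob_sq P (\<lambda>k l. c * (\<Sum>p\<in>Q. a p k l)) = c\<^sup>2 * (\<Sum>p\<in>Q. \<Sum>q\<in>Q. \<Sum>k<P. \<Sum>l<P. a p k l * a q k l)"
proof -
  have "frob_sq P (\<lambda>k l. c * (\<Sum>p\<in>Q. a p k l)) = c\<^sup>2 * (\<Sum>k<P. \<Sum>l<P. \<Sum>p\<in>Q. \<Sum>q\<in>Q. a p k l * a q k l)"
    unfolding frob_sq_def power_mult_distrib power2_eq_square[of "sum _ _"] sum_product
    by (simp add: sum_distrib_left)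
  also have "(\<Sum>k<P. \<Sum>l<P. \<Sum>p\<in>Q. \<Sum>q\<in>Q. a p k l * a q k l) = (\<Sum>p\<in>Q. \<Sum>q\<in>Q. \<Sum>k<P. \<Sum>l<P. a p k l * a q k l)"
  proof -
    have "(\<Sum>k<P. \<Sum>l<P. \<Sum>p\<in>Q. \<Sum>q\<in>Q. a p k l * a q k l) = (\<Sum>k<P. \<Sum>p\<in>Q. \<Sum>q\<in>Q. \<Sum>l<P. a p k l * a q k l)"
      by (intro sum.cong refl) (subst sum.swap, rule sum.cong, rule refl, rule sum.swap)
    also have "\<dots> = (\<Sum>p\<in>Q. \<Sum>q\<in>Q. \<Sum>k<P. \<Sum>l<P. a p k l * a q k l)"
      by (subst sum.swap, rule sum.cong, rule refl, rule sum.swap)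
    finally show ?thesis .
  qed
  finally show ?thesis .
qed

definition frob_error_bound :: "real \<Rightarrow> real \<Rightarrow> real \<Rightarrow> nat \<Rightarrow> real" where
  "frob_error_bound r v K n = 1296 * r * (real n / (real n - 1)\<^sup>2)
    + 1024 * v * r * ((real n)\<^sup>2 / (real n - 1)\<^sup>2) + 576 * K * (real n / (real n - 1)\<^sup>2)"

lemma frob_error_bound_tendsto_zero:
  assumes r: "r \<longlonglongrightarrow> c" and v: "v \<longlonglongrightarrow> 0"
  shows "(\<lambda>n. frob_error_bound (r n) (v n) K n) \<longlonglongrightarrow> 0"
proof -
  have w: "(\<lambda>n. real n / (real n - 1)\<^sup>2) \<longlonglongrightarrow> 0" by real_asymp
  have u: "(\<lambda>n. (real n)\<^sup>2 / (real n - 1)\<^sup>2) \<longlonglongrightarrow> 1" by real_asymp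
  have "(\<lambda>n. frob_error_bound (r n) (v n) K n) \<longlonglongrightarrow> 1296 * c * 0 + 1024 * 0 * c * 1 + 576 * K * 0"
    unfolding frob_error_bound_def by (intro tendsto_intros r v w u)
  then show ?thesis by simp
qed

section \<open>The sign model\<close>

lemma sgnv_swap: "sgnv P y x k = - sgnv P x y k"
  unfolding sgnv_def by (auto simp: sgn_if)

lemma abs_sgnv_le_1: "\<bar>sgnv P x y k\<bar> \<le> 1"
  unfolding sgnv_def by (auto simp: sgn_if)

locale sign_model = prob_space M for M :: "(nat \<Rightarrow> real) measure" +
  fixes P :: nat
  assumes sets_eq_Rp: "sets M = sets (Rp P)"
    and P_pos: "0 < P"
begin

abbreviation A :: "(nat \<Rightarrow> real) \<Rightarrow> nat \<Rightarrow> real" where "A \<equiv> Avec P M"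

lemma measurable_coordinate [measurable]: "k < P \<Longrightarrow> (\<lambda>x. x k) \<in> borel_measurable M"
proof -
  assume "k < P"
  then have "(\<lambda>x. x k) \<in> measurable (Rp P) borel"
    unfolding Rp_def by (auto intro!: measurable_component_singleton)
  then show ?thesis using measurable_cong_sets[OF sets_eq_Rp refl, of borel] by blast
qed

lemma measurable_sgnv [measurable (raw)]:
  "f \<in> measurable N M \<Longrightarrow> g \<in> measurable N M \<Longrightarrow> (\<lambda>\<omega>. sgnv P (f \<omega>) (g \<omega>) k) \<in> borel_measurable N"
  unfolding sgnv_def by (cases "k < P") auto

lemma measurable_Avec [measurable (raw)]:
  assumes [measurable]: "f \<in> measurable N M"
  shows "(\<lambda>\<omega>. A (f \<omega>) k) \<in> borel_measurable N"
proof -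
  have "(\<lambda>x. \<integral>y. sgnv P x y k \<partial>M) \<in> borel_measurable M" by measurable
  then show ?thesis unfolding Avec_def by measurable
qed

lemma abs_Avec_le_1: "\<bar>A x k\<bar> \<le> 1"
  unfolding Avec_def by (rule abs_integral_le_bound) (rule abs_sgnv_le_1)

lemma bounded_measurable_sgnv [simp]:
  "f \<in> measurable N M \<Longrightarrow> g \<in> measurable N M \<Longrightarrow> bounded_measurable N (\<lambda>z. sgnv P (f z) (g z) k)"
  "g \<in> measurable N M \<Longrightarrow> bounded_measurable N (\<lambda>z. sgnv P x (g z) k)"
  "f \<in> measurable N M \<Longrightarrow> bounded_measurable N (\<lambda>z. sgnv P (f z) y k)"
proof -
  have bound: "\<exists>B. \<forall>z. \<bar>sgnv P (f z) (g z) k\<bar> \<le> B" for f g :: "'a \<Rightarrow> nat \<Rightarrow> real"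
    using abs_sgnv_le_1 by blast
  show "f \<in> measurable N M \<Longrightarrow> g \<in> measurable N M \<Longrightarrow> bounded_measurable N (\<lambda>z. sgnv P (f z) (g z) k)"
    using bound unfolding bounded_measurable_def by simp
  show "g \<in> measurable N M \<Longrightarrow> bounded_measurable N (\<lambda>z. sgnv P x (g z) k)"
    using bound[of "\<lambda>_. x"] unfolding bounded_measurable_def
    by (cases "k < P") (simp_all add: sgnv_def)
  show "f \<in> measurable N M \<Longrightarrow> bounded_measurable N (\<lambda>z. sgnv P (f z) y k)"
    using bound[of _ "\<lambda>_. y"] unfolding bounded_measurable_def
    by (cases "k < P") (simp_all add: sgnv_def)
qed

lemma bounded_measurable_Avec [simp]:
  "f \<in> measurable N M \<Longrightarrow> bounded_measurable N (\<lambda>z. A (f z) k)"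
  using abs_Avec_le_1 unfolding bounded_measurable_def by auto

lemma integral_sgnv_snd [simp]: "(\<integral>y. sgnv P x y k \<partial>M) = A x k"
  by (simp add: Avec_def)

lemma integral_sgnv_fst: "(\<integral>x. sgnv P x y k \<partial>M) = - A y k"
  unfolding Avec_def by (simp add: sgnv_swap[of _ _ y])

lemma integral_Avec [simp]: "(\<integral>x. A x k \<partial>M) = 0"
proof -
  have "(\<integral>x. A x k \<partial>M) = (\<integral>y. \<integral>x. sgnv P x y k \<partial>M \<partial>M)"
    by (simp add: integral_swap)
  then show ?thesis by (simp add: integral_sgnv_fst)
qed

lemma Sigma1_eq: "Sigma1 P M k l = (\<integral>x. \<integral>y. sgnv P x y k * sgnv P x y l \<partial>M \<partial>M)"
proof -
  have split: "(case w of (x, y) \<Rightarrow> sgnv P x y) = sgnv P (fst w) (snd w)" for w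
    by (simp add: split_beta)
  show ?thesis
    unfolding Sigma1_def covm_def split by (simp add: integral_pair_iterated)
qed

lemma Sigma2_eq: "Sigma2 P M k l = (\<integral>x. A x k * A x l \<partial>M)"
  unfolding Sigma2_def covm_def by simp

lemma Sigma2_sym: "Sigma2 P M l k = Sigma2 P M k l"
  unfolding Sigma2_eq by (simp add: mult.commute)

definition eps :: "(nat \<Rightarrow> real) \<Rightarrow> (nat \<Rightarrow> real) \<Rightarrow> nat \<Rightarrow> real" where
  "eps x y k = sgnv P x y k - A x k + A y k"

lemma epsv_eq_eps: "epsv P M X i j k = eps (X i) (X j) k"
  unfolding epsv_def eps_def ..

lemma eps_swap: "eps y x k = - eps x y k"
  unfolding eps_def sgnv_swap[of P y x] by simp

lemma abs_eps_le_3: "\<bar>eps x y k\<bar> \<le> 3"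
  unfolding eps_def using abs_sgnv_le_1[of P x y k] abs_Avec_le_1[of x k] abs_Avec_le_1[of y k]
  by linarith

lemma bounded_measurable_eps [simp]:
  "f \<in> measurable N M \<Longrightarrow> g \<in> measurable N M \<Longrightarrow> bounded_measurable N (\<lambda>z. eps (f z) (g z) k)"
  "g \<in> measurable N M \<Longrightarrow> bounded_measurable N (\<lambda>z. eps x (g z) k)"
  unfolding eps_def by simp_all

lemma integral_sgnv_Avec: "(\<integral>x. \<integral>y. sgnv P x y k * A y l \<partial>M \<partial>M) = - Sigma2 P M k l"
proof -
  have "(\<integral>x. \<integral>y. sgnv P x y k * A y l \<partial>M \<partial>M) = (\<integral>y. \<integral>x. sgnv P x y k * A y l \<partial>M \<partial>M)"
    by (simp add: integral_swap)
  then show ?thesis by (simp add: integral_sgnv_fst Sigma2_eq)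
qed

lemma integral_eps_eps: "(\<integral>x. \<integral>y. eps x y k * eps x y l \<partial>M \<partial>M) = Sigma3 P M k l"
proof -
  have "(\<integral>y. eps x y k * eps x y l \<partial>M) = (\<integral>y. sgnv P x y k * sgnv P x y l \<partial>M) - A x k * A x l
     + (\<integral>y. sgnv P x y k * A y l \<partial>M) + (\<integral>y. sgnv P x y l * A y k \<partial>M) + Sigma2 P M k l" for x
  proof -
    have "(\<integral>y. eps x y k * eps x y l \<partial>M) = (\<integral>y. sgnv P x y k * sgnv P x y l - A x l * sgnv P x y k
       + sgnv P x y k * A y l - A x k * sgnv P x y l + A x k * A x l - A x k * A y l
       + sgnv P x y l * A y k - A x l * A y k + A y k * A y l \<partial>M)"
      unfolding eps_def by (rule Bochner_Integration.integral_cong) (simp_all add: algebra_simps)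
    then show ?thesis by (simp add: Sigma2_eq prob_space)
  qed
  then show ?thesis
    by (simp add: Sigma1_eq[symmetric] Sigma2_eq[symmetric] Sigma3_def integral_sgnv_Avec
        Sigma2_sym prob_space)
qed

definition sign_inner :: "(nat \<Rightarrow> real) \<Rightarrow> (nat \<Rightarrow> real) \<Rightarrow> (nat \<Rightarrow> real) \<Rightarrow> real" where
  "sign_inner x y z = (\<Sum>k<P. sgnv P x y k * sgnv P x z k)"

definition sign_inner_mean :: real where
  "sign_inner_mean = (\<integral>x. \<integral>y. \<integral>z. sign_inner x y z \<partial>M \<partial>M \<partial>M)"

lemma bounded_measurable_sign_inner [simp]:
  "f \<in> measurable N M \<Longrightarrow> g \<in> measurable N M \<Longrightarrow> h \<in> measurable N M \<Longrightarrow>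
    bounded_measurable N (\<lambda>w. sign_inner (f w) (g w) (h w))"
  "g \<in> measurable N M \<Longrightarrow> h \<in> measurable N M \<Longrightarrow> bounded_measurable N (\<lambda>w. sign_inner x (g w) (h w))"
  "h \<in> measurable N M \<Longrightarrow> bounded_measurable N (\<lambda>w. sign_inner x y (h w))"
  "g \<in> measurable N M \<Longrightarrow> bounded_measurable N (\<lambda>w. sign_inner x (g w) z)"
  unfolding sign_inner_def by simp_all

lemma varA_eq: "varA P M = (\<integral>x. \<integral>y. \<integral>z. (sign_inner x y z - sign_inner_mean)\<^sup>2 \<partial>M \<partial>M \<partial>M)"
proof -
  have T: "(\<lambda>(x, y, z). \<Sum>k<P. sgnv P x y k * sgnv P x z k) = (\<lambda>w. sign_inner (fst w) (fst (snd w)) (snd (snd w)))"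
    by (auto simp: sign_inner_def)
  have mean: "integral\<^sup>L (M \<Otimes>\<^sub>M (M \<Otimes>\<^sub>M M)) (\<lambda>w. sign_inner (fst w) (fst (snd w)) (snd (snd w)))
      = sign_inner_mean"
    unfolding sign_inner_mean_def by (simp add: integral_triple_iterated)
  show ?thesis
    unfolding varA_def Let_def T mean
    by (simp add: integral_triple_iterated[where h="\<lambda>x y z. (sign_inner x y z - sign_inner_mean)\<^sup>2"])
qed

definition csgn :: "(nat \<Rightarrow> real) \<Rightarrow> (nat \<Rightarrow> real) \<Rightarrow> nat \<Rightarrow> real" where
  "csgn x y k = sgnv P x y k - A x k"

lemma bounded_measurable_csgn [simp]:
  "f \<in> measurable N M \<Longrightarrow> g \<in> measurable N M \<Longrightarrow> bounded_measurable N (\<lambda>w. csgn (f w) (g w) k)"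
  "g \<in> measurable N M \<Longrightarrow> bounded_measurable N (\<lambda>w. csgn x (g w) k)"
  unfolding csgn_def by simp_all

lemma abs_csgn_le_2: "\<bar>csgn x y k\<bar> \<le> 2"
  unfolding csgn_def using abs_sgnv_le_1[of P x y k] abs_Avec_le_1[of x k] by linarith

lemma sum_csgn_csgn:
  "(\<Sum>k<P. csgn x y k * csgn x z k) =
    (sign_inner x y z - sign_inner_mean) - (\<integral>z'. sign_inner x y z' - sign_inner_mean \<partial>M)
    - (\<integral>y'. sign_inner x y' z - sign_inner_mean \<partial>M)
    + (\<integral>y'. \<integral>z'. sign_inner x y' z' - sign_inner_mean \<partial>M \<partial>M)"
  by (simp add: sign_inner_def csgn_def prob_space algebra_simps sum.distrib sum_subtractf)

definition csgn_cov :: "(nat \<Rightarrow> real) \<Rightarrow> nat \<Rightarrow> nat \<Rightarrow> real" where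
  "csgn_cov x k l = (\<integral>y. csgn x y k * csgn x y l \<partial>M)"

lemma sum_csgn_cov_square:
  "(\<Sum>k<P. \<Sum>l<P. (csgn_cov x k l)\<^sup>2) = (\<integral>y. \<integral>z. (\<Sum>k<P. csgn x y k * csgn x z k)\<^sup>2 \<partial>M \<partial>M)"
proof -
  have "(\<integral>z. (\<Sum>k<P. csgn x y k * csgn x z k)\<^sup>2 \<partial>M) =
      (\<integral>z. (\<Sum>k<P. \<Sum>l<P. (csgn x y k * csgn x y l) * (csgn x z k * csgn x z l)) \<partial>M)" for y
    by (rule Bochner_Integration.integral_cong[OF refl]) (simp add: power2_eq_square sum_product algebra_simps)
  then show ?thesis by (simp add: csgn_cov_def power2_eq_square)
qed

lemma integral_sum_csgn_cov_square_le: "(\<integral>x. (\<Sum>k<P. \<Sum>l<P. (csgn_cov x k l)\<^sup>2) \<partial>M) \<le> 16 * varA P M"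
proof -
  have "(\<Sum>k<P. \<Sum>l<P. (csgn_cov x k l)\<^sup>2) \<le> 16 * (\<integral>y. \<integral>z. (sign_inner x y z - sign_inner_mean)\<^sup>2 \<partial>M \<partial>M)" for x
    unfolding sum_csgn_cov_square sum_csgn_csgn by (intro double_centering_square_le) simp_all
  then have "(\<integral>x. (\<Sum>k<P. \<Sum>l<P. (csgn_cov x k l)\<^sup>2) \<partial>M)
      \<le> (\<integral>x. 16 * (\<integral>y. \<integral>z. (sign_inner x y z - sign_inner_mean)\<^sup>2 \<partial>M \<partial>M) \<partial>M)"
    by (intro integral_mono) (simp_all add: csgn_cov_def)
  then show ?thesis by (simp add: varA_eq)
qed

lemma integral_Avec_quadratic_le:
  "(\<integral>y. (\<Sum>l<P. v l * A y l)\<^sup>2 \<partial>M) \<le> spec_norm P (Sigma1 P M) * (\<Sum>l<P. (v l)\<^sup>2)"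
proof -
  have "(\<integral>y. (\<Sum>l<P. v l * A y l)\<^sup>2 \<partial>M) = (\<integral>y. (\<integral>z. (\<Sum>l<P. v l * sgnv P y z l) \<partial>M)\<^sup>2 \<partial>M)"
    by simp
  also have "\<dots> \<le> (\<integral>y. \<integral>z. (\<Sum>l<P. v l * sgnv P y z l)\<^sup>2 \<partial>M \<partial>M)"
    by (intro integral_mono square_integral_le_integral_square) simp_all
  also have "\<dots> = (\<integral>y. \<integral>z. (\<Sum>k<P. \<Sum>l<P. v k * v l * (sgnv P y z k * sgnv P y z l)) \<partial>M \<partial>M)"
    by (simp add: power2_eq_square sum_product algebra_simps)
  also have "\<dots> = (\<Sum>k<P. \<Sum>l<P. v k * v l * Sigma1 P M k l)"
    by (simp add: Sigma1_eq)
  also have "\<dots> \<le> spec_norm P (Sigma1 P M) * (\<Sum>l<P. (v l)\<^sup>2)"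
    by (rule quadratic_form_le_spec_norm[OF P_pos])
  finally show ?thesis .
qed

(* Truncated below at 1, so that it can serve as the positive weight of the AM-GM step in
   sum_csgn_cross_square_le. *)
definition Sigma1_norm_bound :: real where
  "Sigma1_norm_bound = max (spec_norm P (Sigma1 P M)) 1"

lemma Sigma1_norm_bound_pos: "0 < Sigma1_norm_bound"
  by (simp add: Sigma1_norm_bound_def)

lemma integral_Avec_quadratic_le_Sigma1_norm_bound:
  "(\<integral>y. (\<Sum>l<P. v l * A y l)\<^sup>2 \<partial>M) \<le> Sigma1_norm_bound * (\<Sum>l<P. (v l)\<^sup>2)"
  using integral_Avec_quadratic_le[of v]
    mult_right_mono[of "spec_norm P (Sigma1 P M)" Sigma1_norm_bound "\<Sum>l<P. (v l)\<^sup>2"]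
  by (simp add: Sigma1_norm_bound_def sum_nonneg)

lemma integral_Avec_quadratic_eq:
  "(\<integral>y. (\<Sum>l<P. v l * A y l)\<^sup>2 \<partial>M) = (\<Sum>k<P. \<Sum>l<P. v k * v l * Sigma2 P M k l)"
proof -
  have "(\<integral>y. (\<Sum>l<P. v l * A y l)\<^sup>2 \<partial>M) = (\<integral>y. (\<Sum>k<P. \<Sum>l<P. v k * v l * (A y k * A y l)) \<partial>M)"
    by (simp add: power2_eq_square sum_product algebra_simps)
  then show ?thesis by (simp add: Sigma2_eq)
qed

lemma sum_Sigma2_square_le: "(\<Sum>k<P. \<Sum>l<P. (Sigma2 P M k l)\<^sup>2) \<le> Sigma1_norm_bound * P"
proof -
  have "(Sigma2 P M k l)\<^sup>2 = (\<integral>x. A x k * A x l \<partial>M) * Sigma2 P M k l" for k l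
    unfolding power2_eq_square by (subst (1) Sigma2_eq) (rule refl)
  then have "(\<Sum>k<P. \<Sum>l<P. (Sigma2 P M k l)\<^sup>2) = (\<integral>x. (\<Sum>k<P. \<Sum>l<P. A x k * A x l * Sigma2 P M k l) \<partial>M)"
    by simp
  also have "\<dots> = (\<integral>x. (\<integral>y. (\<Sum>l<P. A x l * A y l)\<^sup>2 \<partial>M) \<partial>M)"
    by (simp only: integral_Avec_quadratic_eq)
  also have "\<dots> \<le> (\<integral>x. Sigma1_norm_bound * P \<partial>M)"
  proof (intro integral_mono)
    fix x
    have "(\<Sum>l<P. (A x l)\<^sup>2) \<le> (\<Sum>l<P. 1)"
      by (intro sum_mono) (simp add: abs_square_le_1 abs_Avec_le_1)
    then have "Sigma1_norm_bound * (\<Sum>l<P. (A x l)\<^sup>2) \<le> Sigma1_norm_bound * P"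
      using Sigma1_norm_bound_pos by (intro mult_left_mono) simp_all
    with integral_Avec_quadratic_le_Sigma1_norm_bound[of "A x"]
    show "(\<integral>y. (\<Sum>l<P. A x l * A y l)\<^sup>2 \<partial>M) \<le> Sigma1_norm_bound * P"
      by linarith
  qed simp_all
  finally show ?thesis by (simp add: prob_space)
qed

definition csgn_cross :: "(nat \<Rightarrow> real) \<Rightarrow> nat \<Rightarrow> nat \<Rightarrow> real" where
  "csgn_cross x k l = (\<integral>y. csgn x y k * A y l \<partial>M)"

lemma sum_csgn_cross_square_le: "(\<Sum>l<P. (csgn_cross x k l)\<^sup>2) \<le> 4 * Sigma1_norm_bound"
proof -
  define c where "c l = csgn_cross x k l" for l
  define h where "h y = (\<Sum>l<P. c l * A y l)" for y
  have "(\<Sum>l<P. (c l)\<^sup>2) = (\<Sum>l<P. c l * (\<integral>y. csgn x y k * A y l \<partial>M))"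
    by (simp add: c_def csgn_cross_def power2_eq_square)
  also have "\<dots> = (\<integral>y. csgn x y k * h y \<partial>M)"
    unfolding h_def by (simp add: sum_distrib_left algebra_simps)
  finally have "(\<Sum>l<P. (c l)\<^sup>2) = (\<integral>y. csgn x y k * h y \<partial>M)" .
  then have "2 * (\<Sum>l<P. (c l)\<^sup>2) = (\<integral>y. 2 * csgn x y k * h y \<partial>M)"
    by (simp add: mult.assoc)
  also have "\<dots> \<le> (\<integral>y. Sigma1_norm_bound * (csgn x y k)\<^sup>2 + (h y)\<^sup>2 / Sigma1_norm_bound \<partial>M)"
    by (intro integral_mono two_mult_le_weighted_squares Sigma1_norm_bound_pos) (simp_all add: h_def)
  also have "\<dots> = Sigma1_norm_bound * (\<integral>y. (csgn x y k)\<^sup>2 \<partial>M) + (\<integral>y. (h y)\<^sup>2 \<partial>M) / Sigma1_norm_bound"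
    by (simp add: h_def)
  also have "\<dots> \<le> Sigma1_norm_bound * 4 + (\<Sum>l<P. (c l)\<^sup>2)"
  proof (intro add_mono mult_left_mono)
    show "(\<integral>y. (csgn x y k)\<^sup>2 \<partial>M) \<le> 4"
      using abs_csgn_le_2[of x _ k]
      by (intro integral_le_const AE_I2) (auto simp: abs_le_square_iff[of _ 2, simplified])
    show "(\<integral>y. (h y)\<^sup>2 \<partial>M) / Sigma1_norm_bound \<le> (\<Sum>l<P. (c l)\<^sup>2)"
      using integral_Avec_quadratic_le_Sigma1_norm_bound[of c] Sigma1_norm_bound_pos
      by (simp add: h_def divide_le_eq mult.commute)
  qed (use Sigma1_norm_bound_pos in simp)
  finally show ?thesis by (simp add: c_def)
qed

definition eps_cond :: "(nat \<Rightarrow> real) \<Rightarrow> nat \<Rightarrow> nat \<Rightarrow> real" where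
  "eps_cond x k l = (\<integral>y. eps x y k * eps x y l \<partial>M)"

lemma bounded_measurable_eps_cond [simp]:
  "f \<in> measurable N M \<Longrightarrow> bounded_measurable N (\<lambda>w. eps_cond (f w) k l)"
  using bounded_measurable_compose[of M "\<lambda>x. eps_cond x k l"] unfolding eps_cond_def by simp

lemma integral_eps_cond: "(\<integral>x. eps_cond x k l \<partial>M) = Sigma3 P M k l"
  unfolding eps_cond_def by (rule integral_eps_eps)

lemma eps_cond_decompose:
  "eps_cond x k l = csgn_cov x k l + csgn_cross x k l + csgn_cross x l k + Sigma2 P M k l"
proof -
  have "eps_cond x k l = (\<integral>y. csgn x y k * csgn x y l + csgn x y k * A y l + csgn x y l * A y k
      + A y k * A y l \<partial>M)"
    unfolding eps_cond_def
    by (rule Bochner_Integration.integral_cong[OF refl]) (simp add: eps_def csgn_def algebra_simps)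
  then show ?thesis by (simp add: csgn_cov_def csgn_cross_def Sigma2_eq)
qed

lemma sum_eps_cond_square_le:
  "(\<Sum>k<P. \<Sum>l<P. (eps_cond x k l)\<^sup>2) \<le> 4 * (\<Sum>k<P. \<Sum>l<P. (csgn_cov x k l)\<^sup>2) + 36 * Sigma1_norm_bound * P"
proof -
  define nP where "nP = Sigma1_norm_bound * P"
  have cross: "(\<Sum>k<P. \<Sum>l<P. (csgn_cross x k l)\<^sup>2) \<le> 4 * nP"
    using sum_mono[of "{..<P}" "\<lambda>k. \<Sum>l<P. (csgn_cross x k l)\<^sup>2" "\<lambda>_. 4 * Sigma1_norm_bound",
      OF sum_csgn_cross_square_le]
    by (simp add: nP_def mult_ac)
  have cross_swap: "(\<Sum>k<P. \<Sum>l<P. (csgn_cross x l k)\<^sup>2) = (\<Sum>k<P. \<Sum>l<P. (csgn_cross x k l)\<^sup>2)"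
    by (rule sum.swap)
  have "(\<Sum>k<P. \<Sum>l<P. (eps_cond x k l)\<^sup>2) \<le> (\<Sum>k<P. \<Sum>l<P. 4 * ((csgn_cov x k l)\<^sup>2
      + (csgn_cross x k l)\<^sup>2 + (csgn_cross x l k)\<^sup>2 + (Sigma2 P M k l)\<^sup>2))"
    unfolding eps_cond_decompose by (intro sum_mono power2_sum4_le)
  also have "\<dots> = 4 * (\<Sum>k<P. \<Sum>l<P. (csgn_cov x k l)\<^sup>2) + 4 * (\<Sum>k<P. \<Sum>l<P. (csgn_cross x k l)\<^sup>2)
      + 4 * (\<Sum>k<P. \<Sum>l<P. (csgn_cross x l k)\<^sup>2) + 4 * (\<Sum>k<P. \<Sum>l<P. (Sigma2 P M k l)\<^sup>2)"
    by (simp add: sum.distrib sum_distrib_left)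
  finally have sum_le: "(\<Sum>k<P. \<Sum>l<P. (eps_cond x k l)\<^sup>2) \<le> 4 * (\<Sum>k<P. \<Sum>l<P. (csgn_cov x k l)\<^sup>2)
      + 4 * (\<Sum>k<P. \<Sum>l<P. (csgn_cross x k l)\<^sup>2) + 4 * (\<Sum>k<P. \<Sum>l<P. (csgn_cross x l k)\<^sup>2)
      + 4 * (\<Sum>k<P. \<Sum>l<P. (Sigma2 P M k l)\<^sup>2)" .
  have "\<And>a b c c' d :: real. a \<le> 4 * b + 4 * c + 4 * c' + 4 * d \<Longrightarrow> c \<le> 4 * nP \<Longrightarrow> c' = c
      \<Longrightarrow> d \<le> nP \<Longrightarrow> a \<le> 4 * b + 36 * nP"
    by linarith
  from this[OF sum_le cross cross_swap sum_Sigma2_square_le[folded nP_def]] show ?thesis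
    by (simp add: nP_def mult.assoc)
qed

lemma integral_eps_cond_dev_le:
  "(\<integral>x. (\<Sum>k<P. \<Sum>l<P. (eps_cond x k l - Sigma3 P M k l)\<^sup>2) \<partial>M) \<le> 64 * varA P M + 36 * Sigma1_norm_bound * P"
proof -
  have "(\<integral>x. (eps_cond x k l - Sigma3 P M k l)\<^sup>2 \<partial>M)
      = (\<integral>x. (eps_cond x k l)\<^sup>2 - 2 * Sigma3 P M k l * eps_cond x k l + (Sigma3 P M k l)\<^sup>2 \<partial>M)"
    for k l by (simp add: power2_diff)
  then have "(\<integral>x. (eps_cond x k l - Sigma3 P M k l)\<^sup>2 \<partial>M) \<le> (\<integral>x. (eps_cond x k l)\<^sup>2 \<partial>M)" for k l
    by (simp add: integral_eps_cond prob_space power2_eq_square)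
  then have "(\<integral>x. (\<Sum>k<P. \<Sum>l<P. (eps_cond x k l - Sigma3 P M k l)\<^sup>2) \<partial>M)
      \<le> (\<integral>x. (\<Sum>k<P. \<Sum>l<P. (eps_cond x k l)\<^sup>2) \<partial>M)"
    by (simp add: sum_mono)
  also have "\<dots> \<le> (\<integral>x. 4 * (\<Sum>k<P. \<Sum>l<P. (csgn_cov x k l)\<^sup>2) + 36 * Sigma1_norm_bound * P \<partial>M)"
    by (intro integral_mono sum_eps_cond_square_le) (simp_all add: csgn_cov_def)
  also have "\<dots> \<le> 64 * varA P M + 36 * Sigma1_norm_bound * P"
    using integral_sum_csgn_cov_square_le by (simp add: csgn_cov_def prob_space)
  finally show ?thesis .
qed

definition eps_dev :: "(nat \<Rightarrow> real) \<Rightarrow> (nat \<Rightarrow> real) \<Rightarrow> nat \<Rightarrow> nat \<Rightarrow> real" where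
  "eps_dev x y k l = eps x y k * eps x y l - Sigma3 P M k l"

lemma eps_dev_swap: "eps_dev y x k l = eps_dev x y k l"
  unfolding eps_dev_def using eps_swap[of x y k] eps_swap[of x y l] by simp

lemma eps_dev_doubleton:
  "{a, b} = {c, d} \<Longrightarrow> eps_dev (X a) (X b) k l = eps_dev (X c) (X d) k l"
  by (auto simp: doubleton_eq_iff eps_dev_swap)

lemma abs_eps_dev_le_18: "\<bar>eps_dev x y k l\<bar> \<le> 18"
proof -
  have eps_eps: "\<bar>eps x y k * eps x y l\<bar> \<le> 9" for x y
    using mult_mono[OF abs_eps_le_3[of x y k] abs_eps_le_3[of x y l]] by (simp add: abs_mult)
  have "\<bar>Sigma3 P M k l\<bar> \<le> 9"
    unfolding integral_eps_eps[symmetric]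
    by (intro abs_integral_le_bound eps_eps)
  then show ?thesis using eps_eps[of x y] unfolding eps_dev_def by linarith
qed

lemma bounded_measurable_eps_dev [simp]:
  "f \<in> measurable N M \<Longrightarrow> g \<in> measurable N M \<Longrightarrow> bounded_measurable N (\<lambda>w. eps_dev (f w) (g w) k l)"
  "g \<in> measurable N M \<Longrightarrow> bounded_measurable N (\<lambda>w. eps_dev x (g w) k l)"
  unfolding eps_dev_def by simp_all

lemma integral_eps_dev_snd: "(\<integral>z. eps_dev x z k l \<partial>M) = eps_cond x k l - Sigma3 P M k l"
  unfolding eps_dev_def eps_cond_def by (simp add: prob_space)

lemma integral_eps_cond_dev: "(\<integral>x. eps_cond x k l - Sigma3 P M k l \<partial>M) = 0"
  by (simp add: integral_eps_cond prob_space)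

definition eps_cond_var :: real where
  "eps_cond_var = (\<integral>x. (\<Sum>k<P. \<Sum>l<P. (eps_cond x k l - Sigma3 P M k l)\<^sup>2) \<partial>M)"

lemma eps_cond_var_nonneg: "0 \<le> eps_cond_var"
  unfolding eps_cond_var_def by (intro integral_nonneg_AE AE_I2 sum_nonneg) auto

abbreviation sample :: "nat \<Rightarrow> (nat \<Rightarrow> nat \<Rightarrow> real) measure" where
  "sample n \<equiv> PiM {..<n} (\<lambda>_. M)"

lemma measurable_sample_component [simp]: "i < n \<Longrightarrow> (\<lambda>X. X i) \<in> measurable (sample n) M"
  by (rule measurable_component_singleton) simp

lemma prob_space_sample: "prob_space (sample n)"
  by (simp add: prob_space_PiM prob_space_axioms)

lemma finite_measure_sample [simp]: "finite_measure (sample n)"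
  using prob_space_sample prob_space.finite_measure by blast

lemma integral_eps_dev_shared:
  assumes "s < n" "t < n" "u < n" "s \<noteq> t" "s \<noteq> u" "t \<noteq> u"
  shows "(\<integral>X. (\<Sum>k<P. \<Sum>l<P. eps_dev (X s) (X t) k l * eps_dev (X s) (X u) k l) \<partial>sample n)
    = eps_cond_var"
proof -
  have "(\<integral>X. (\<Sum>k<P. \<Sum>l<P. eps_dev (X s) (X t) k l * eps_dev (X s) (X u) k l) \<partial>sample n)
      = (\<integral>X. (\<Sum>k<P. \<Sum>l<P. eps_dev (X s) (X t) k l * (eps_cond (X s) k l - Sigma3 P M k l)) \<partial>sample n)"
    using assms
    by (subst integral_PiM_average_coordinate[where i=u])
      (simp_all add: prob_space_axioms integral_eps_dev_snd)
  also have "\<dots> = (\<integral>X. (\<Sum>k<P. \<Sum>l<P. (eps_cond (X s) k l - Sigma3 P M k l)\<^sup>2) \<partial>sample n)"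
    using assms
    by (subst integral_PiM_average_coordinate[where i=t])
      (simp_all add: prob_space_axioms integral_eps_dev_snd power2_eq_square)
  also have "\<dots> = eps_cond_var"
  proof -
    have "bounded_measurable M (\<lambda>x. \<Sum>k<P. \<Sum>l<P. (eps_cond x k l - Sigma3 P M k l)\<^sup>2)"
      by simp
    then show ?thesis
      unfolding eps_cond_var_def using assms
      by (intro integral_PiM_component prob_space_axioms) (auto simp: bounded_measurable_def)
  qed
  finally show ?thesis .
qed

lemma integral_eps_dev_disjoint:
  assumes "a < n" "b < n" "c < n" "d < n" "a \<noteq> b" "a \<noteq> c" "a \<noteq> d" "b \<noteq> c" "b \<noteq> d" "c \<noteq> d"
  shows "(\<integral>X. (\<Sum>k<P. \<Sum>l<P. eps_dev (X a) (X b) k l * eps_dev (X c) (X d) k l) \<partial>sample n) = 0"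
proof -
  have "(\<integral>X. (\<Sum>k<P. \<Sum>l<P. eps_dev (X a) (X b) k l * eps_dev (X c) (X d) k l) \<partial>sample n)
      = (\<integral>X. (\<Sum>k<P. \<Sum>l<P. eps_dev (X a) (X b) k l * (eps_cond (X c) k l - Sigma3 P M k l)) \<partial>sample n)"
    using assms
    by (subst integral_PiM_average_coordinate[where i=d])
      (simp_all add: prob_space_axioms integral_eps_dev_snd)
  also have "\<dots> = 0"
    using assms
    by (subst integral_PiM_average_coordinate[where i=c])
      (simp_all add: prob_space_axioms integral_eps_cond_dev)
  finally show ?thesis .
qed

lemma integral_eps_dev_same_le:
  "(\<integral>X. (\<Sum>k<P. \<Sum>l<P. eps_dev (X i) (X j) k l * eps_dev (X i) (X j) k l) \<partial>sample n) \<le> 324 * (real P)\<^sup>2"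
proof -
  have "\<bar>\<Sum>k<P. \<Sum>l<P. eps_dev x y k l * eps_dev x y k l\<bar> \<le> 324 * (real P)\<^sup>2" for x y
  proof -
    have "\<bar>\<Sum>k<P. \<Sum>l<P. eps_dev x y k l * eps_dev x y k l\<bar> \<le> (\<Sum>k<P. \<Sum>l<P. \<bar>eps_dev x y k l * eps_dev x y k l\<bar>)"
      by (rule order_trans[OF sum_abs sum_mono[OF sum_abs]])
    also have "\<dots> \<le> (\<Sum>k<P. \<Sum>l<P. 18 * 18)"
      unfolding abs_mult by (intro sum_mono mult_mono abs_eps_dev_le_18) auto
    finally show ?thesis by (simp add: power2_eq_square)
  qed
  then show ?thesis
    using prob_space.abs_integral_le_bound[OF prob_space_sample] by (simp add: abs_le_iff)
qed

section \<open>Expansion of the Frobenius error over pairs of pairs\<close>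

lemma M3_minus_Sigma3:
  assumes "2 \<le> n"
  shows "M3 n P M X k l - Sigma3 P M k l =
    2 / (real n * (real n - 1)) * (\<Sum>p\<in>index_pairs n. eps_dev (X (snd p)) (X (fst p)) k l)"
proof -
  define c where "c = 2 / (real n * (real n - 1))"
  have c_card: "c * real (card (index_pairs n)) = 1"
    using assms unfolding c_def real_card_index_pairs by (simp add: field_simps)
  have "M3 n P M X k l = c * (\<Sum>p\<in>index_pairs n. eps (X (snd p)) (X (fst p)) k * eps (X (snd p)) (X (fst p)) l)"
    unfolding M3_def c_def epsv_eq_eps sum_index_pairs ..
  moreover have "(\<Sum>p\<in>index_pairs n. eps_dev (X (snd p)) (X (fst p)) k l) =
      (\<Sum>p\<in>index_pairs n. eps (X (snd p)) (X (fst p)) k * eps (X (snd p)) (X (fst p)) l)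
      - real (card (index_pairs n)) * Sigma3 P M k l"
    unfolding eps_dev_def by (simp add: sum_subtractf)
  ultimately have "M3 n P M X k l - Sigma3 P M k l = c * (\<Sum>p\<in>index_pairs n. eps_dev (X (snd p)) (X (fst p)) k l)"
    using c_card by (simp add: right_diff_distrib mult.assoc[symmetric])
  then show ?thesis by (simp only: c_def)
qed

definition pair_moment :: "nat \<Rightarrow> nat \<times> nat \<Rightarrow> nat \<times> nat \<Rightarrow> real" where
  "pair_moment n p q = (\<integral>X. (\<Sum>k<P. \<Sum>l<P.
      eps_dev (X (snd p)) (X (fst p)) k l * eps_dev (X (snd q)) (X (fst q)) k l) \<partial>sample n)"

lemma integral_frob_sq_M3:
  assumes "2 \<le> n"
  shows "(\<integral>X. frob_sq P (\<lambda>k l. M3 n P M X k l - Sigma3 P M k l) \<partial>sample n) =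
    (2 / (real n * (real n - 1)))\<^sup>2 * (\<Sum>p\<in>index_pairs n. \<Sum>q\<in>index_pairs n. pair_moment n p q)"
proof -
  have [simp]: "p \<in> index_pairs n \<Longrightarrow> (\<lambda>X. X (fst p)) \<in> measurable (sample n) M"
    "p \<in> index_pairs n \<Longrightarrow> (\<lambda>X. X (snd p)) \<in> measurable (sample n) M" for p
    using index_pairs_subset[of n] by (auto intro!: measurable_sample_component)
  show ?thesis
    unfolding M3_minus_Sigma3[OF assms] frob_sq_scaled_sum pair_moment_def
    by (simp add: Bochner_Integration.integral_sum)
qed

lemma pair_moment_le:
  assumes p: "p \<in> index_pairs n" and q: "q \<in> index_pairs n"
  shows "pair_moment n p q \<le> 324 * (real P)\<^sup>2 * of_bool (p = q) + eps_cond_var *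
    (of_bool (fst q = fst p) + of_bool (snd q = snd p) + of_bool (snd q = fst p) + of_bool (fst q = snd p))"
proof -
  have lt: "snd p < fst p" "fst p < n" "snd q < fst q" "fst q < n"
    using p q unfolding index_pairs_def by auto
  have nonneg: "0 \<le> eps_cond_var * (of_bool (fst q = fst p) + of_bool (snd q = snd p)
      + of_bool (snd q = fst p) + of_bool (fst q = snd p))"
    using eps_cond_var_nonneg by simp
  have diag_nonneg: "0 \<le> 324 * (real P)\<^sup>2 * of_bool (p = q)"
    by (cases "p = q") simp_all
  consider (same) "p = q"
    | (shared) "p \<noteq> q" "{snd p, fst p} \<inter> {snd q, fst q} \<noteq> {}"
    | (disjoint) "{snd p, fst p} \<inter> {snd q, fst q} = {}"
    by blast
  then show ?thesis
  proof cases
    case same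
    then have "pair_moment n p q \<le> 324 * (real P)\<^sup>2"
      unfolding pair_moment_def by (simp add: integral_eps_dev_same_le)
    with same nonneg show ?thesis by simp
  next
    case shared
    have "{snd p, fst p} \<noteq> {snd q, fst q}"
      using shared(1) lt by (cases p, cases q) (auto simp: doubleton_eq_iff)
    then obtain s t u where stu: "{snd p, fst p} = {s, t}" "{snd q, fst q} = {s, u}" "s \<noteq> t" "s \<noteq> u" "t \<noteq> u"
      using doubletons_sharing_one_element[of "snd p" "fst p" "snd q" "fst q"] shared(2) lt by auto
    then have "pair_moment n p q = eps_cond_var"
      unfolding pair_moment_def eps_dev_doubleton[OF stu(1)] eps_dev_doubleton[OF stu(2)]
      using lt by (intro integral_eps_dev_shared) (auto simp: doubleton_eq_iff)
    moreover have "(1::real) \<le> of_bool (fst q = fst p) + of_bool (snd q = snd p) + of_bool (snd q = fst p)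
        + of_bool (fst q = snd p)"
      using shared(2) by (auto split: if_splits)
    from mult_left_mono[OF this eps_cond_var_nonneg]
    have "eps_cond_var \<le> eps_cond_var * (of_bool (fst q = fst p) + of_bool (snd q = snd p)
        + of_bool (snd q = fst p) + of_bool (fst q = snd p))"
      by simp
    ultimately show ?thesis using diag_nonneg by linarith
  next
    case disjoint
    then have "pair_moment n p q = 0"
      unfolding pair_moment_def using lt by (intro integral_eps_dev_disjoint) auto
    with nonneg diag_nonneg show ?thesis by linarith
  qed
qed

lemma sum_pair_moment_le:
  "(\<Sum>p\<in>index_pairs n. \<Sum>q\<in>index_pairs n. pair_moment n p q)
    \<le> real n * real n * (324 * (real P)\<^sup>2 + 4 * real n * eps_cond_var)"
proof -
  have row: "(\<Sum>q\<in>index_pairs n. pair_moment n p q) \<le> 324 * (real P)\<^sup>2 + 4 * real n * eps_cond_var"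
    if p: "p \<in> index_pairs n" for p
  proof -
    have "(\<Sum>q\<in>index_pairs n. pair_moment n p q) \<le> (\<Sum>q\<in>index_pairs n.
        324 * (real P)\<^sup>2 * of_bool (p = q) + eps_cond_var * (of_bool (fst q = fst p)
        + of_bool (snd q = snd p) + of_bool (snd q = fst p) + of_bool (fst q = snd p)))"
      using p by (intro sum_mono pair_moment_le)
    also have "\<dots> = 324 * (real P)\<^sup>2 * (\<Sum>q\<in>index_pairs n. of_bool (p = q))
        + eps_cond_var * ((\<Sum>q\<in>index_pairs n. of_bool (fst q = fst p))
          + (\<Sum>q\<in>index_pairs n. of_bool (snd q = snd p))
          + (\<Sum>q\<in>index_pairs n. of_bool (snd q = fst p))
          + (\<Sum>q\<in>index_pairs n. of_bool (fst q = snd p)))"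
      by (simp add: sum.distrib sum_distrib_left distrib_left)
    also have "\<dots> \<le> 324 * (real P)\<^sup>2 * 1 + eps_cond_var * (real n + real n + real n + real n)"
    proof -
      have "index_pairs n \<inter> {q. p = q} = {p}" using p by auto
      then have "(\<Sum>q\<in>index_pairs n. of_bool (p = q)) = (1::real)" by simp
      then show ?thesis using eps_cond_var_nonneg
        by (intro add_mono mult_left_mono sum_index_pairs_fst_eq_le sum_index_pairs_snd_eq_le) simp_all
    qed
    finally show ?thesis by (simp add: mult_ac)
  qed
  have "(\<Sum>p\<in>index_pairs n. \<Sum>q\<in>index_pairs n. pair_moment n p q)
      \<le> real (card (index_pairs n)) * (324 * (real P)\<^sup>2 + 4 * real n * eps_cond_var)"
    using sum_mono[of "index_pairs n", OF row] by simp
  also have "\<dots> \<le> real n * real n * (324 * (real P)\<^sup>2 + 4 * real n * eps_cond_var)"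
  proof (intro mult_right_mono)
    show "real (card (index_pairs n)) \<le> real n * real n"
      unfolding real_card_index_pairs by (simp add: field_simps)
  qed (use eps_cond_var_nonneg in simp)
  finally show ?thesis .
qed

lemma frob_error_le:
  assumes n: "2 \<le> n" and C: "spec_norm P (Sigma1 P M) \<le> C"
  shows "(1 / real P) * (\<integral>X. frob_sq P (\<lambda>k l. M3 n P M X k l - Sigma3 P M k l) \<partial>sample n)
    \<le> frob_error_bound (real P / real n) (varA P M / (real P)\<^sup>2) (max C 1) n"
proof -
  have P: "0 < real P" using P_pos by simp
  have n1: "0 < real n - 1" using n by simp
  have V: "eps_cond_var \<le> 64 * varA P M + 36 * max C 1 * P"
  proof -
    have "Sigma1_norm_bound \<le> max C 1" using C unfolding Sigma1_norm_bound_def by simp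
    then have "36 * Sigma1_norm_bound * P \<le> 36 * max C 1 * P" by (simp add: mult_right_mono)
    with integral_eps_cond_dev_le show ?thesis unfolding eps_cond_var_def by linarith
  qed
  have "(1 / real P) * (\<integral>X. frob_sq P (\<lambda>k l. M3 n P M X k l - Sigma3 P M k l) \<partial>sample n)
      \<le> (1 / real P) * ((2 / (real n * (real n - 1)))\<^sup>2 *
        (real n * real n * (324 * (real P)\<^sup>2 + 4 * real n * (64 * varA P M + 36 * max C 1 * P))))"
    unfolding integral_frob_sq_M3[OF n] using P eps_cond_var_nonneg V
    by (intro mult_left_mono sum_pair_moment_le[THEN order_trans]) (simp_all add: mult_left_mono)
  also have "\<dots> = frob_error_bound (real P / real n) (varA P M / (real P)\<^sup>2) (max C 1) n"
  proof -
    have "(1 / p) * ((2 / (x * d))\<^sup>2 * (x * x * (324 * p\<^sup>2 + 4 * x * (64 * V + 36 * K * p))))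
      = 1296 * (p / x) * (x / d\<^sup>2) + 1024 * (V / p\<^sup>2) * (p / x) * (x\<^sup>2 / d\<^sup>2) + 576 * K * (x / d\<^sup>2)"
      if "x \<noteq> 0" "d \<noteq> 0" "p \<noteq> 0" for x d p V K :: real
      using that by (simp add: field_simps power2_eq_square)
    then show ?thesis using P n1 n by (simp add: frob_error_bound_def)
  qed
  finally show ?thesis .
qed

end

theorem lemma3:
  fixes p :: "nat \<Rightarrow> nat" and \<mu> :: "nat \<Rightarrow> (nat \<Rightarrow> real) measure"
    and C c :: real
  assumes prob: "\<And>n. prob_space (\<mu> n)"
    and sets: "\<And>n. sets (\<mu> n) = sets (Rp (p n))"
    and abscont: "\<And>n. absolutely_continuous (Rp (p n)) (\<mu> n)"
    and ppos: "\<And>n. p n > 0"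
    and normC: "\<And>n. spec_norm (p n) (Sigma1 (p n) (\<mu> n)) \<le> C"
    and varcond: "(\<lambda>n. varA (p n) (\<mu> n) / (real (p n))\<^sup>2) \<longlonglongrightarrow> 0"
    and pinf: "filterlim p at_top sequentially"
    and cpos: "0 < c"
    and ratio: "(\<lambda>n. real (p n) / real n) \<longlonglongrightarrow> c"
  shows "(\<lambda>n. (1 / real (p n)) *
            (\<integral>X. frob_sq (p n) (\<lambda>k l. M3 n (p n) (\<mu> n) X k l - Sigma3 (p n) (\<mu> n) k l)
               \<partial>(PiM {..<n} (\<lambda>_. \<mu> n)))) \<longlonglongrightarrow> 0"
proof (rule tendsto_sandwich[OF _ _ tendsto_const
      frob_error_bound_tendsto_zero[OF ratio varcond, where K = "max C 1"]], goal_cases nonneg bounded)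
  (* The bound of frob_error_le holds for every n \<ge> 2. *)
  case nonneg
  show ?case
    unfolding frob_sq_def
    by (intro always_eventually allI mult_nonneg_nonneg integral_nonneg_AE AE_I2 sum_nonneg) auto
next
  case bounded
  have "sign_model (\<mu> n) (p n)" for n
    using prob sets ppos by (simp add: sign_model_def sign_model_axioms_def)
  then show ?case
    using eventually_ge_at_top[of "2::nat"]
    by (elim eventually_mono) (rule sign_model.frob_error_le[OF _ _ normC])
qed

end
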